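(* Let $E$ be an $\mathbb{R}$-group, $X$ a locally compact (Hausdorff) space not reduced to one point, and suppose there exists a continuous absorptive action $\mathcal{H}=(H_\varepsilon)_{\varepsilon\in E}$ of $E$ on $X$. Then $X$ is noncompact, nondiscrete, and $\sigma$-compact.
   Context: An $\mathbb{R}$-group is an abelian group $E$ (operation written multiplicatively) whose underlying set is a subset of $\mathbb{R}$ containing all positive integers, such that: (RG1) with the natural order of $\mathbb{R}$, $E$ is a totally ordered group; (RG2) with the topology induced from $\mathbb{R}$, $E$ is a locally compact group; (RG3) there is a nonconstant continuous homomorphism $h:E\to\mathbb{R}_+^*$ such that for every $\alpha\in E$ the set $\{\varepsilon\in E:\varepsilon\ge\alpha\}$ is integrable for $h\cdot m$, $m$ a Haar measure on $E$. $e$ is the identity of $E$, $\varepsilon^{-1}$ the group inverse; inequalities refer to the order of $\mathbb{R}$. An action of $E$ on $X$ is a family $(H_\varepsilon)_{\varepsilon\in E}$ of bijections of $X$ with $H_\varepsilon\circ H_{\varepsilon'}=H_{\varepsilon\varepsilon'}$, $H_e=\mathrm{id}_X$; it is continuous if $(\varepsilon,x)\mapsto H_\varepsilon(x)$ is continuous on $E\times X$; it is absorptive if some $\omega\in X$ satisfies: for every neighbourhood $V$ of $\omega$ and every $x\in X$ there are a neighbourhood $U$ of $x$ and $\alpha\in E$ with $H_{\varepsilon^{-1}}(U)\subset V$ for all $\varepsilon\le\alpha$. *)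

theory Defs
  imports "HOL-Analysis.Analysis" "HOL-Algebra.Group"
begin

definition Egrp :: "real set \<Rightarrow> (real \<Rightarrow> real \<Rightarrow> real) \<Rightarrow> real \<Rightarrow> real monoid" where
  "Egrp E mul e = \<lparr>carrier = E, mult = mul, one = e\<rparr>"

definition haar_measure_on ::
  "real set \<Rightarrow> (real \<Rightarrow> real \<Rightarrow> real) \<Rightarrow> real measure \<Rightarrow> bool" where
  "haar_measure_on E mul m \<longleftrightarrow>
     space m = E \<and> sets m = sets (restrict_space borel E) \<and>
     (\<forall>g\<in>E. \<forall>A\<in>sets m. emeasure m ((\<lambda>x. mul g x) ` A) = emeasure m A) \<and>
     (\<forall>K. compactin (subtopology euclideanreal E) K \<longrightarrow> emeasure m K < \<infinity>) \<and>
     (\<forall>U. openin (subtopology euclideanreal E) U \<and> U \<noteq> {} \<longrightarrow> emeasure m U > 0) \<and>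
     (\<forall>A\<in>sets m. emeasure m A =
        (INF U\<in>{U. openin (subtopology euclideanreal E) U \<and> A \<subseteq> U}. emeasure m U)) \<and>
     (\<forall>U. openin (subtopology euclideanreal E) U \<longrightarrow> emeasure m U =
        (SUP K\<in>{K. compactin (subtopology euclideanreal E) K \<and> K \<subseteq> U}. emeasure m K))"

definition R_group :: "real set \<Rightarrow> (real \<Rightarrow> real \<Rightarrow> real) \<Rightarrow> real \<Rightarrow> bool" where
  "R_group E mul e \<longleftrightarrow>
     comm_group (Egrp E mul e) \<and>
     (\<forall>n::nat. n \<ge> 1 \<longrightarrow> real n \<in> E) \<and>
     \<comment> \<open>(RG1) totally ordered group for the natural order of the reals\<close>
     (\<forall>a\<in>E. \<forall>b\<in>E. \<forall>c\<in>E. a \<le> b \<longrightarrow> mul a c \<le> mul b c) \<and>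
     \<comment> \<open>(RG2) locally compact (topological) group for the induced topology\<close>
     continuous_map (prod_topology (subtopology euclideanreal E) (subtopology euclideanreal E))
        (subtopology euclideanreal E) (\<lambda>(a, b). mul a b) \<and>
     continuous_map (subtopology euclideanreal E) (subtopology euclideanreal E)
        (\<lambda>a. inv\<^bsub>Egrp E mul e\<^esub> a) \<and>
     locally_compact_space (subtopology euclideanreal E) \<and>
     \<comment> \<open>(RG3)\<close>
     (\<exists>h m. continuous_map (subtopology euclideanreal E) euclideanreal h \<and>
        (\<forall>a\<in>E. h a > 0) \<and>
        (\<forall>a\<in>E. \<forall>b\<in>E. h (mul a b) = h a * h b) \<and>
        (\<exists>a\<in>E. \<exists>b\<in>E. h a \<noteq> h b) \<and>
        haar_measure_on E mul m \<and>
        (\<forall>\<alpha>\<in>E. (\<integral>\<^sup>+ x\<in>{\<epsilon>\<in>E. \<epsilon> \<ge> \<alpha>}. ennreal (h x) \<partial>m) < \<infinity>))"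

definition group_action_on ::
  "real set \<Rightarrow> (real \<Rightarrow> real \<Rightarrow> real) \<Rightarrow> real \<Rightarrow> 'a topology \<Rightarrow> (real \<Rightarrow> 'a \<Rightarrow> 'a) \<Rightarrow> bool" where
  "group_action_on E mul e X H \<longleftrightarrow>
     (\<forall>\<epsilon>\<in>E. bij_betw (H \<epsilon>) (topspace X) (topspace X)) \<and>
     (\<forall>\<epsilon>\<in>E. \<forall>\<epsilon>'\<in>E. \<forall>x\<in>topspace X. H \<epsilon> (H \<epsilon>' x) = H (mul \<epsilon> \<epsilon>') x) \<and>
     (\<forall>x\<in>topspace X. H e x = x)"

definition continuous_action ::
  "real set \<Rightarrow> 'a topology \<Rightarrow> (real \<Rightarrow> 'a \<Rightarrow> 'a) \<Rightarrow> bool" where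
  "continuous_action E X H \<longleftrightarrow>
     continuous_map (prod_topology (subtopology euclideanreal E) X) X (\<lambda>(\<epsilon>, x). H \<epsilon> x)"

definition absorptive_action ::
  "real set \<Rightarrow> (real \<Rightarrow> real \<Rightarrow> real) \<Rightarrow> real \<Rightarrow> 'a topology \<Rightarrow> (real \<Rightarrow> 'a \<Rightarrow> 'a) \<Rightarrow> bool" where
  "absorptive_action E mul e X H \<longleftrightarrow>
     (\<exists>\<omega>\<in>topspace X. \<forall>V. V \<subseteq> topspace X \<and> (\<exists>W. openin X W \<and> \<omega> \<in> W \<and> W \<subseteq> V) \<longrightarrow>
        (\<forall>x\<in>topspace X. \<exists>U \<alpha>. U \<subseteq> topspace X \<and> (\<exists>W. openin X W \<and> x \<in> W \<and> W \<subseteq> U) \<and>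
           \<alpha> \<in> E \<and> (\<forall>\<epsilon>\<in>E. \<epsilon> \<le> \<alpha> \<longrightarrow> H (inv\<^bsub>Egrp E mul e\<^esub> \<epsilon>) ` U \<subseteq> V)))"

definition sigma_compact_space :: "'a topology \<Rightarrow> bool" where
  "sigma_compact_space X \<longleftrightarrow>
     (\<exists>K::nat \<Rightarrow> 'a set. (\<forall>n. compactin X (K n)) \<and> (\<Union>n. K n) = topspace X)"

end

theory Submission
  imports Defs
begin

(* The proof is organised around one notion: a set W is absorbed into V if, for all
   sufficiently small epsilon, H (epsilon^-1) maps W into V.  Absorption is stable under
   finite unions, and an absorptive action has a point omega such that every point has an
   open neighbourhood absorbed into any given neighbourhood of omega.
   - Noncompactness: in a compact X finitely many such neighbourhoods cover X, so all of X
     is absorbed into a neighbourhood of omega avoiding a second point y; since every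
     H epsilon is onto, this is impossible.
   - Nondiscreteness: if X were discrete, {omega} would be open, and neighbourhoods of
     y and omega absorbed into {omega} contradict the injectivity of H epsilon.
   - Sigma-compactness: take a compact neighbourhood K of omega; then X is the union of the
     compact images H (n^-1) ` K, n = 1, 2, ..., because the inverses of the integers are
     arbitrarily small in E (the integers are unbounded and inversion reverses the order).
   The file first collects the needed facts on E and on actions, then develops absorption,
   proves the three properties as separate lemmas, and combines them at the end. *)

abbreviation Einv :: "real set \<Rightarrow> (real \<Rightarrow> real \<Rightarrow> real) \<Rightarrow> real \<Rightarrow> real \<Rightarrow> real" where
  "Einv E mul e \<equiv> \<lambda>\<epsilon>. inv\<^bsub>Egrp E mul e\<^esub> \<epsilon>"

lemma Egrp_carrier: "carrier (Egrp E mul e) = E"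
  by (simp add: Egrp_def)

lemma Egrp_mult_one: "x \<otimes>\<^bsub>Egrp E mul e\<^esub> y = mul x y" "\<one>\<^bsub>Egrp E mul e\<^esub> = e"
  by (simp_all add: Egrp_def)

lemma Egrp_inv [simp]:
  assumes "group (Egrp E mul e)" "\<epsilon> \<in> E"
  shows "Einv E mul e \<epsilon> \<in> E" "Einv E mul e (Einv E mul e \<epsilon>) = \<epsilon>"
    "mul (Einv E mul e \<epsilon>) \<epsilon> = e"
  using group.inv_closed[OF assms(1)] group.inv_inv[OF assms(1)] group.l_inv[OF assms(1)] assms(2)
  by (simp_all add: Egrp_carrier Egrp_mult_one)

lemma R_group_group: "R_group E mul e \<Longrightarrow> group (Egrp E mul e)"
  by (simp add: R_group_def comm_group.axioms(2))

lemma R_group_Suc: "R_group E mul e \<Longrightarrow> real (Suc n) \<in> E"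
proof -
  assume "R_group E mul e"
  then have "\<forall>n::nat. n \<ge> 1 \<longrightarrow> real n \<in> E" by (simp add: R_group_def)
  from spec[OF this, of "Suc n"] show ?thesis by simp
qed

lemma R_group_inv_antimono:
  assumes R: "R_group E mul e" and a: "a \<in> E" and b: "b \<in> E" and ab: "a \<le> b"
  shows "Einv E mul e b \<le> Einv E mul e a"
proof -
  let ?G = "Egrp E mul e"
  interpret comm_group ?G using R by (simp add: R_group_def)
  have mono: "\<forall>a\<in>E. \<forall>b\<in>E. \<forall>c\<in>E. a \<le> b \<longrightarrow> mul a c \<le> mul b c"
    using R by (simp add: R_group_def)
  have aG: "a \<in> carrier ?G" and bG: "b \<in> carrier ?G" using a b by (simp_all add: Egrp_carrier)
  let ?c = "inv\<^bsub>?G\<^esub> a \<otimes>\<^bsub>?G\<^esub> inv\<^bsub>?G\<^esub> b"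
  have "?c \<in> carrier ?G" using aG bG by simp
  then have c: "?c \<in> E" by (simp add: Egrp_carrier)
  have a_c: "a \<otimes>\<^bsub>?G\<^esub> ?c = inv\<^bsub>?G\<^esub> b" using aG bG by (simp add: m_assoc[symmetric])
  have b_c: "b \<otimes>\<^bsub>?G\<^esub> ?c = inv\<^bsub>?G\<^esub> a" using aG bG m_lcomm[of b "inv\<^bsub>?G\<^esub> a"] by simp
  have "mul a ?c \<le> mul b ?c" using mono a b c ab by blast
  then show ?thesis using a_c b_c by (simp add: Egrp_mult_one)
qed

lemma R_group_inv_nat_below:
  assumes R: "R_group E mul e" and \<alpha>: "\<alpha> \<in> E"
  obtains n :: nat where "Einv E mul e (real (Suc n)) \<le> \<alpha>"
proof -
  have G: "group (Egrp E mul e)" using R by (rule R_group_group)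
  obtain n :: nat where "Einv E mul e \<alpha> < real n" using reals_Archimedean2 by blast
  then have "Einv E mul e \<alpha> \<le> real (Suc n)" by simp
  then have "Einv E mul e (real (Suc n)) \<le> Einv E mul e (Einv E mul e \<alpha>)"
    by (rule R_group_inv_antimono[OF R Egrp_inv(1)[OF G \<alpha>] R_group_Suc[OF R]])
  then show ?thesis using that G \<alpha> by simp
qed

lemma action_bij:
  "group_action_on E mul e X H \<Longrightarrow> \<epsilon> \<in> E \<Longrightarrow> bij_betw (H \<epsilon>) (topspace X) (topspace X)"
  by (simp add: group_action_on_def)

lemma action_inv_cancel:
  assumes G: "group (Egrp E mul e)" and act: "group_action_on E mul e X H"
    and \<epsilon>: "\<epsilon> \<in> E" and x: "x \<in> topspace X"
  shows "H (Einv E mul e \<epsilon>) (H \<epsilon> x) = x"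
proof -
  have "H (Einv E mul e \<epsilon>) (H \<epsilon> x) = H (mul (Einv E mul e \<epsilon>) \<epsilon>) x"
    using act G \<epsilon> x by (simp add: group_action_on_def)
  then show ?thesis using act G \<epsilon> x by (simp add: group_action_on_def)
qed

lemma continuous_action_map:
  assumes "continuous_action E X H" and "\<epsilon> \<in> E"
  shows "continuous_map X X (H \<epsilon>)"
proof -
  have "continuous_map X (prod_topology (subtopology euclideanreal E) X) (\<lambda>x. (\<epsilon>, x))"
    using assms(2) by (simp add: continuous_map_paired)
  then have "continuous_map X X ((\<lambda>(\<epsilon>, x). H \<epsilon> x) \<circ> (\<lambda>x. (\<epsilon>, x)))"
    using assms(1) continuous_map_compose unfolding continuous_action_def by blast
  then show ?thesis by (simp add: o_def)
qed

section \<open>Absorption\<close>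

definition absorbed_into ::
  "real set \<Rightarrow> (real \<Rightarrow> real \<Rightarrow> real) \<Rightarrow> real \<Rightarrow> (real \<Rightarrow> 'a \<Rightarrow> 'a) \<Rightarrow> 'a set \<Rightarrow> 'a set \<Rightarrow> bool"
  where "absorbed_into E mul e H W V \<longleftrightarrow>
    (\<exists>\<alpha>\<in>E. \<forall>\<epsilon>\<in>E. \<epsilon> \<le> \<alpha> \<longrightarrow> H (Einv E mul e \<epsilon>) ` W \<subseteq> V)"

lemma absorbed_intoE:
  assumes "absorbed_into E mul e H W V"
  obtains \<alpha> where "\<alpha> \<in> E" "\<And>\<epsilon>. \<epsilon> \<in> E \<Longrightarrow> \<epsilon> \<le> \<alpha> \<Longrightarrow> H (Einv E mul e \<epsilon>) ` W \<subseteq> V"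
  using assms unfolding absorbed_into_def by blast

lemma absorbed_into_subset:
  "absorbed_into E mul e H W V \<Longrightarrow> W' \<subseteq> W \<Longrightarrow> absorbed_into E mul e H W' V"
  unfolding absorbed_into_def by blast

text \<open>Two absorbed sets are absorbed together, from the smaller of their two thresholds on.\<close>

lemma absorbed_into_Un:
  assumes "absorbed_into E mul e H W1 V" and "absorbed_into E mul e H W2 V"
  shows "absorbed_into E mul e H (W1 \<union> W2) V"
proof -
  obtain \<alpha>1 \<alpha>2 where \<alpha>: "\<alpha>1 \<in> E" "\<alpha>2 \<in> E"
    and W1: "\<forall>\<epsilon>\<in>E. \<epsilon> \<le> \<alpha>1 \<longrightarrow> H (Einv E mul e \<epsilon>) ` W1 \<subseteq> V"
    and W2: "\<forall>\<epsilon>\<in>E. \<epsilon> \<le> \<alpha>2 \<longrightarrow> H (Einv E mul e \<epsilon>) ` W2 \<subseteq> V"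
    using assms unfolding absorbed_into_def by blast
  have "min \<alpha>1 \<alpha>2 \<in> E" using \<alpha> by (simp add: min_def)
  moreover have "\<forall>\<epsilon>\<in>E. \<epsilon> \<le> min \<alpha>1 \<alpha>2 \<longrightarrow> H (Einv E mul e \<epsilon>) ` (W1 \<union> W2) \<subseteq> V"
    using W1 W2 by (simp add: image_Un)
  ultimately show ?thesis unfolding absorbed_into_def by blast
qed

lemma absorbed_into_Union:
  assumes "finite F" "F \<noteq> {}" "\<forall>W\<in>F. absorbed_into E mul e H W V"
  shows "absorbed_into E mul e H (\<Union>F) V"
  using assms by (induction F rule: finite_ne_induct) (auto intro: absorbed_into_Un)

text \<open>By surjectivity of the H epsilon, only all of X can absorb all of X.\<close>

lemma absorbed_topspace:
  assumes G: "group (Egrp E mul e)" and act: "group_action_on E mul e X H"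
    and abs: "absorbed_into E mul e H (topspace X) V"
  shows "topspace X \<subseteq> V"
proof -
  obtain \<alpha> where \<alpha>: "\<alpha> \<in> E" and into: "H (Einv E mul e \<alpha>) ` topspace X \<subseteq> V"
    using abs by (elim absorbed_intoE) blast
  have "H (Einv E mul e \<alpha>) ` topspace X = topspace X"
    using bij_betw_imp_surj_on[OF action_bij[OF act Egrp_inv(1)[OF G \<alpha>]]] .
  then show ?thesis using into by simp
qed

text \<open>By injectivity of the H epsilon, a set absorbed into a singleton has at most one point.\<close>

lemma absorbed_singleton:
  assumes G: "group (Egrp E mul e)" and act: "group_action_on E mul e X H"
    and abs: "absorbed_into E mul e H W {\<omega>}"
    and xy: "x \<in> W" "y \<in> W" "x \<in> topspace X" "y \<in> topspace X"
  shows "x = y"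
proof -
  obtain \<alpha> where \<alpha>: "\<alpha> \<in> E" and into: "H (Einv E mul e \<alpha>) ` W \<subseteq> {\<omega>}"
    using abs by (elim absorbed_intoE) blast
  have "H (Einv E mul e \<alpha>) x = H (Einv E mul e \<alpha>) y" using into xy by blast
  then show ?thesis
    using inj_onD[OF bij_betw_imp_inj_on[OF action_bij[OF act Egrp_inv(1)[OF G \<alpha>]]]] xy by simp
qed

definition absorbing_point ::
  "real set \<Rightarrow> (real \<Rightarrow> real \<Rightarrow> real) \<Rightarrow> real \<Rightarrow> 'a topology \<Rightarrow> (real \<Rightarrow> 'a \<Rightarrow> 'a) \<Rightarrow> 'a \<Rightarrow> bool"
  where "absorbing_point E mul e X H \<omega> \<longleftrightarrow> \<omega> \<in> topspace X \<and>
    (\<forall>V W0 x. openin X W0 \<and> \<omega> \<in> W0 \<and> W0 \<subseteq> V \<and> V \<subseteq> topspace X \<and> x \<in> topspace X \<longrightarrow>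
       (\<exists>W. openin X W \<and> x \<in> W \<and> absorbed_into E mul e H W V))"

lemma absorbing_point_topspace: "absorbing_point E mul e X H \<omega> \<Longrightarrow> \<omega> \<in> topspace X"
  by (simp add: absorbing_point_def)

lemma absorbing_pointD:
  assumes "absorbing_point E mul e X H \<omega>"
    and "openin X W0" "\<omega> \<in> W0" "W0 \<subseteq> V" "V \<subseteq> topspace X" "x \<in> topspace X"
  obtains W where "openin X W" "x \<in> W" "absorbed_into E mul e H W V"
  using assms unfolding absorbing_point_def by blast

lemma absorptive_action_point:
  assumes "absorptive_action E mul e X H"
  obtains \<omega> where "absorbing_point E mul e X H \<omega>"
proof -
  obtain \<omega> where \<omega>: "\<omega> \<in> topspace X" and abs:
    "\<forall>V. V \<subseteq> topspace X \<and> (\<exists>W. openin X W \<and> \<omega> \<in> W \<and> W \<subseteq> V) \<longrightarrow>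
        (\<forall>x\<in>topspace X. \<exists>U \<alpha>. U \<subseteq> topspace X \<and> (\<exists>W. openin X W \<and> x \<in> W \<and> W \<subseteq> U) \<and>
           \<alpha> \<in> E \<and> (\<forall>\<epsilon>\<in>E. \<epsilon> \<le> \<alpha> \<longrightarrow> H (Einv E mul e \<epsilon>) ` U \<subseteq> V))"
    using assms unfolding absorptive_action_def ..
  have nhds: "\<exists>W. openin X W \<and> x \<in> W \<and> absorbed_into E mul e H W V"
    if "openin X W0" "\<omega> \<in> W0" "W0 \<subseteq> V" "V \<subseteq> topspace X" "x \<in> topspace X" for V W0 x
  proof -
    have "V \<subseteq> topspace X \<and> (\<exists>W. openin X W \<and> \<omega> \<in> W \<and> W \<subseteq> V)" using that by blast
    from bspec[OF mp[OF spec[OF abs, of V] this] that(5)]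
    obtain U \<alpha> W where "openin X W" "x \<in> W" "W \<subseteq> U" "\<alpha> \<in> E"
      "\<forall>\<epsilon>\<in>E. \<epsilon> \<le> \<alpha> \<longrightarrow> H (Einv E mul e \<epsilon>) ` U \<subseteq> V"
      by (elim exE conjE)
    then show ?thesis unfolding absorbed_into_def by blast
  qed
  have "absorbing_point E mul e X H \<omega>"
    unfolding absorbing_point_def using \<omega> nhds by blast
  then show ?thesis by (rule that)
qed

section \<open>The three properties of X\<close>

text \<open>Noncompactness: a finite subcover by absorbed neighbourhoods would absorb all of X into
  a neighbourhood of omega that misses a second point y.\<close>

lemma absorbing_not_compact:
  assumes G: "group (Egrp E mul e)" and act: "group_action_on E mul e X H"
    and \<omega>: "absorbing_point E mul e X H \<omega>" and hd: "Hausdorff_space X"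
    and y: "y \<in> topspace X" "y \<noteq> \<omega>"
  shows "\<not> compact_space X"
proof
  assume cpt: "compact_space X"
  obtain V where V: "openin X V" "\<omega> \<in> V" "y \<notin> V"
    using hd absorbing_point_topspace[OF \<omega>] y unfolding Hausdorff_space_def disjnt_def by blast
  let ?\<U> = "{W. openin X W \<and> absorbed_into E mul e H W V}"
  have "topspace X \<subseteq> \<Union>?\<U>"
  proof
    fix x assume "x \<in> topspace X"
    with absorbing_pointD[OF \<omega> V(1,2) order_refl openin_subset[OF V(1)]]
    show "x \<in> \<Union>?\<U>" by blast
  qed
  then obtain F where F: "finite F" "F \<subseteq> ?\<U>" "topspace X \<subseteq> \<Union>F"
    using cpt unfolding compact_space_alt by (metis (no_types, lifting) mem_Collect_eq)
  have "F \<noteq> {}" using F(3) y by blast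
  then have "absorbed_into E mul e H (\<Union>F) V" using absorbed_into_Union F by blast
  then have "topspace X \<subseteq> V"
    using absorbed_topspace[OF G act] absorbed_into_subset F(3) by blast
  then show False using y V by blast
qed

text \<open>Nondiscreteness: if {omega} were open, y and omega would have neighbourhoods absorbed
  into {omega}, which injectivity forbids.\<close>

lemma absorbing_not_discrete:
  assumes G: "group (Egrp E mul e)" and act: "group_action_on E mul e X H"
    and \<omega>: "absorbing_point E mul e X H \<omega>"
    and y: "y \<in> topspace X" "y \<noteq> \<omega>"
  shows "X \<noteq> discrete_topology (topspace X)"
proof
  have \<omega>X: "\<omega> \<in> topspace X" using \<omega> by (rule absorbing_point_topspace)
  assume "X = discrete_topology (topspace X)"
  then have open_\<omega>: "openin X {\<omega>}"
    using \<omega>X by (metis discrete_topology_unique_alt empty_subsetI insert_subset)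
  obtain W1 where W1: "y \<in> W1" "absorbed_into E mul e H W1 {\<omega>}"
    using absorbing_pointD[OF \<omega> open_\<omega> _ order_refl _ y(1)] \<omega>X by blast
  obtain W2 where W2: "\<omega> \<in> W2" "absorbed_into E mul e H W2 {\<omega>}"
    using absorbing_pointD[OF \<omega> open_\<omega> _ order_refl _ \<omega>X] \<omega>X by blast
  have "y = \<omega>"
    using absorbed_singleton[OF G act absorbed_into_Un[OF W1(2) W2(2)]] W1(1) W2(1) y(1) \<omega>X
    by blast
  then show False using y by simp
qed

lemma absorbed_point_in_nat_image:
  assumes R: "R_group E mul e" and act: "group_action_on E mul e X H"
    and abs: "absorbed_into E mul e H W K" and x: "x \<in> W" "x \<in> topspace X"
  obtains n :: nat where "x \<in> H (Einv E mul e (real (Suc n))) ` K"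
proof -
  have G: "group (Egrp E mul e)" using R by (rule R_group_group)
  obtain \<alpha> where \<alpha>: "\<alpha> \<in> E" and into: "\<And>\<epsilon>. \<epsilon> \<in> E \<Longrightarrow> \<epsilon> \<le> \<alpha> \<Longrightarrow> H (Einv E mul e \<epsilon>) ` W \<subseteq> K"
    using abs by (elim absorbed_intoE) blast
  obtain n :: nat where n: "Einv E mul e (real (Suc n)) \<le> \<alpha>"
    using R_group_inv_nat_below[OF R \<alpha>] .
  let ?N = "real (Suc n)"
  have N: "?N \<in> E" using R by (rule R_group_Suc)
  have "H (Einv E mul e (Einv E mul e ?N)) x \<in> K"
    using into[OF Egrp_inv(1)[OF G N] n] x(1) by blast
  then have "H ?N x \<in> K" using G N by simp
  moreover have "x = H (Einv E mul e ?N) (H ?N x)"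
    using action_inv_cancel[OF G act N x(2)] by simp
  ultimately show ?thesis using that by blast
qed

text \<open>Sigma-compactness: with K a compact neighbourhood of omega, X is the union of the
  compact sets H (n^-1) ` K.\<close>

lemma absorbing_sigma_compact:
  assumes R: "R_group E mul e" and act: "group_action_on E mul e X H"
    and cont: "continuous_action E X H" and lc: "locally_compact_space X"
    and \<omega>: "absorbing_point E mul e X H \<omega>"
  shows "sigma_compact_space X"
proof -
  have G: "group (Egrp E mul e)" using R by (rule R_group_group)
  have N: "Einv E mul e (real (Suc n)) \<in> E" for n using G R_group_Suc[OF R] by simp
  obtain U K where UK: "openin X U" "compactin X K" "\<omega> \<in> U" "U \<subseteq> K"
    using lc absorbing_point_topspace[OF \<omega>] unfolding locally_compact_space_def by blast
  have KX: "K \<subseteq> topspace X" using UK(2) compactin_subset_topspace by blast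
  define Kn where "Kn n = H (Einv E mul e (real (Suc n))) ` K" for n
  have "compactin X (Kn n)" for n
    unfolding Kn_def by (rule image_compactin[OF UK(2) continuous_action_map[OF cont N]])
  moreover have "(\<Union>n. Kn n) = topspace X"
  proof
    show "(\<Union>n. Kn n) \<subseteq> topspace X"
      unfolding Kn_def using bij_betw_imp_surj_on[OF action_bij[OF act N]] KX by blast
  next
    show "topspace X \<subseteq> (\<Union>n. Kn n)"
    proof
      fix x assume x: "x \<in> topspace X"
      obtain W where "x \<in> W" "absorbed_into E mul e H W K"
        using absorbing_pointD[OF \<omega> UK(1,3,4) KX x] by blast
      then obtain n where "x \<in> Kn n"
        using absorbed_point_in_nat_image[OF R act _ _ x] unfolding Kn_def by blast
      then show "x \<in> (\<Union>n. Kn n)" by blast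
    qed
  qed
  ultimately show ?thesis unfolding sigma_compact_space_def by blast
qed

theorem corollary2p1:
  fixes E :: "real set" and mul :: "real \<Rightarrow> real \<Rightarrow> real" and e :: real
    and X :: "'a topology" and H :: "real \<Rightarrow> 'a \<Rightarrow> 'a"
  assumes "R_group E mul e"
    and "Hausdorff_space X" and "locally_compact_space X"
    and "\<exists>x\<in>topspace X. \<exists>y\<in>topspace X. x \<noteq> y"
    and "group_action_on E mul e X H"
    and "continuous_action E X H"
    and "absorptive_action E mul e X H"
  shows "\<not> compact_space X \<and> X \<noteq> discrete_topology (topspace X) \<and> sigma_compact_space X"
proof -
  have G: "group (Egrp E mul e)" using assms(1) by (rule R_group_group)
  obtain \<omega> where \<omega>: "absorbing_point E mul e X H \<omega>"
    using assms(7) by (rule absorptive_action_point)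
  obtain y where y: "y \<in> topspace X" "y \<noteq> \<omega>" using assms(4) by blast
  show ?thesis
    using absorbing_not_compact[OF G assms(5) \<omega> assms(2) y]
      absorbing_not_discrete[OF G assms(5) \<omega> y]
      absorbing_sigma_compact[OF assms(1,5,6,3) \<omega>]
    by blast
qed

end
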